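(* Let $0<\lambda\le\Lambda$, let $\Omega \subset \mathbb R\times\mathbb R^d$ be any set, and let $u:\Omega\to\mathbb R$ be a function which at every point of $\Omega$ is twice differentiable in $x$ and differentiable in $t$. The following are equivalent: (1) There exists a function $F$ on real symmetric $d\times d$ matrices, uniformly elliptic with constants $\lambda,\Lambda$, such that $u_t(t,x) = F(D^2u(t,x))$ for all $(t,x)\in\Omega$. (2) For every pair of points $(t,x),(s,y)\in\Omega$, $$P^-\big(D^2u(t,x) - D^2u(s,y)\big) \le u_t(t,x) - u_t(s,y) \le P^+\big(D^2u(t,x)-D^2u(s,y)\big).$$
   Context: A function $F$ on real symmetric $d\times d$ matrices is uniformly elliptic with constants $0<\lambda\le\Lambda$ if for all symmetric $A,B$ with $B \ge 0$, $\lambda \operatorname{tr} B \le F(A+B) - F(A) \le \Lambda \operatorname{tr} B$. The Pucci operators are $P^+(M) = \Lambda \operatorname{tr} M_+ - \lambda \operatorname{tr} M_-$ and $P^-(M) = \lambda \operatorname{tr} M_+ - \Lambda \operatorname{tr} M_-$, where $M=M_+-M_-$ with $M_\pm$ positive semidefinite with orthogonal ranges (positive and negative parts of $M$). *)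

theory Defs
  imports "HOL-Analysis.Analysis"
begin

definition symmetric_mat :: "real^'n^'n \<Rightarrow> bool" where
  "symmetric_mat M \<longleftrightarrow> transpose M = M"

definition psd_mat :: "real^'n^'n \<Rightarrow> bool" where
  "psd_mat M \<longleftrightarrow> symmetric_mat M \<and> (\<forall>x. 0 \<le> x \<bullet> (M *v x))"

definition pos_part_mat :: "real^'n^'n \<Rightarrow> real^'n^'n" where
  "pos_part_mat M = (THE P. \<exists>N. psd_mat P \<and> psd_mat N \<and>
       (\<forall>x y. (P *v x) \<bullet> (N *v y) = 0) \<and> M = P - N)"

definition neg_part_mat :: "real^'n^'n \<Rightarrow> real^'n^'n" where
  "neg_part_mat M = pos_part_mat M - M"

definition pucci_plus :: "real \<Rightarrow> real \<Rightarrow> real^'n^'n \<Rightarrow> real" where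
  "pucci_plus lam Lam M = Lam * trace (pos_part_mat M) - lam * trace (neg_part_mat M)"

definition pucci_minus :: "real \<Rightarrow> real \<Rightarrow> real^'n^'n \<Rightarrow> real" where
  "pucci_minus lam Lam M = lam * trace (pos_part_mat M) - Lam * trace (neg_part_mat M)"

text \<open>Uniform ellipticity of F on symmetric matrices (values of F off symmetric matrices are irrelevant).\<close>

definition uniformly_elliptic :: "real \<Rightarrow> real \<Rightarrow> (real^'n^'n \<Rightarrow> real) \<Rightarrow> bool" where
  "uniformly_elliptic lam Lam F \<longleftrightarrow>
     (\<forall>A B. symmetric_mat A \<and> psd_mat B \<longrightarrow>
        lam * trace B \<le> F (A + B) - F A \<and> F (A + B) - F A \<le> Lam * trace B)"

definition twice_diff_at :: "(real^'n \<Rightarrow> real) \<Rightarrow> real^'n \<Rightarrow> real^'n^'n \<Rightarrow> bool" where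
  "twice_diff_at f x H \<longleftrightarrow>
     (\<exists>g e. 0 < e \<and> (\<forall>y\<in>ball x e. (f has_derivative (\<lambda>h. g y \<bullet> h)) (at y)) \<and>
            (g has_derivative (\<lambda>h. H *v h)) (at x))"

end

theory Submission
  imports Defs
begin

(* A symmetric matrix X has an orthonormal eigenbasis (built by maximising the Rayleigh quotient
   on invariant subspaces). Splitting the eigenvalues by sign gives the positive and negative
   parts, and the positive part has the least trace among all decompositions X = P - N with P, N
   positive semidefinite. Since trace P - trace N = trace X for all of them, P^+(X) is the minimum of
   Lam tr P - lam tr N over these decompositions; hence P^+ is subadditive and itself uniformly
   elliptic.

   Necessity: with X = A - B = P - N put C = B - N, so that A = C + P and B = C + N, and apply
   ellipticity to both increments. Sufficiency: F(M) = inf over q of (u_t(q) + P^+(M - D^2u(q))) is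
   an infimum of uniformly elliptic functions, bounded below by subadditivity, and the upper Pucci
   inequality says precisely that the infimum at M = D^2u(p) is attained at q = p. *)

lemma symmetric_mat_inner:
  fixes M :: "real^'n^'n"
  assumes "symmetric_mat M"
  shows "(M *v x) \<bullet> y = x \<bullet> (M *v y)"
  by (metis assms dot_lmul_matrix symmetric_mat_def vector_transpose_matrix)

lemma symmetric_mat_add: "symmetric_mat A \<Longrightarrow> symmetric_mat B \<Longrightarrow> symmetric_mat (A + B)"
  by (simp add: symmetric_mat_def transpose_def vec_eq_iff)

lemma symmetric_mat_diff: "symmetric_mat A \<Longrightarrow> symmetric_mat B \<Longrightarrow> symmetric_mat (A - B)"
  by (simp add: symmetric_mat_def transpose_def vec_eq_iff)

lemma symmetric_mat_zero: "symmetric_mat 0"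
  by (simp add: symmetric_mat_def transpose_def vec_eq_iff)

lemma psd_mat_imp_symmetric_mat: "psd_mat A \<Longrightarrow> symmetric_mat A"
  by (simp add: psd_mat_def)

lemma psd_mat_zero: "psd_mat 0"
  by (simp add: psd_mat_def symmetric_mat_zero)

lemma psd_mat_add: "psd_mat A \<Longrightarrow> psd_mat B \<Longrightarrow> psd_mat (A + B)"
  by (simp add: psd_mat_def symmetric_mat_add matrix_vector_mult_add_rdistrib inner_add_right)

lemma eq_0_if_le_quadratic:
  fixes a r :: real
  assumes "\<And>t. t * a \<le> t\<^sup>2 * r"
  shows "a = 0"
proof (rule ccontr)
  assume "a \<noteq> 0"
  define s where "s = \<bar>r\<bar> + 1"
  have s: "s > 0" by (simp add: s_def)
  have "(a / s) * a \<le> (a / s)\<^sup>2 * r" by (rule assms)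
  then have "a\<^sup>2 * s \<le> a\<^sup>2 * r"
    using s by (simp add: field_simps power2_eq_square)
  then have "s \<le> r" using \<open>a \<noteq> 0\<close> by simp
  then show False by (simp add: s_def)
qed

section \<open>The spectral theorem for symmetric matrices\<close>

lemma symmetric_mat_eigenvector_in_invariant_subspace:
  fixes M :: "real^'n^'n"
  assumes M: "symmetric_mat M" and S: "subspace S" and inv: "\<And>x. x \<in> S \<Longrightarrow> M *v x \<in> S"
    and "S \<noteq> {0}"
  obtains v where "v \<in> S" "norm v = 1" "M *v v = (v \<bullet> (M *v v)) *\<^sub>R v"
proof -
  define q where "q x = x \<bullet> (M *v x)" for x :: "real^'n"
  define K where "K = S \<inter> sphere 0 1"
  have "compact K"
    unfolding K_def by (simp add: S closed_subspace closed_Int_compact inf_commute)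
  obtain x0 where x0: "x0 \<in> S" "x0 \<noteq> 0" using \<open>S \<noteq> {0}\<close> S subspace_0 by blast
  then have "x0 /\<^sub>R norm x0 \<in> K" using S by (simp add: K_def subspace_scale)
  then have "K \<noteq> {}" by blast
  moreover have "continuous_on K q"
    unfolding q_def by (intro continuous_intros linear_continuous_on matrix_vector_mul_linear)
  ultimately obtain v where v: "v \<in> K" and v_max: "\<And>y. y \<in> K \<Longrightarrow> q y \<le> q v"
    using continuous_attains_sup[OF \<open>compact K\<close>] by blast
  define \<mu> where "\<mu> = q v"
  have "v \<in> S" "norm v = 1" using v by (auto simp: K_def)
  have rayleigh_bound: "q x \<le> \<mu> * (x \<bullet> x)" if "x \<in> S" for x
  proof (cases "x = 0")
    case False
    have "x /\<^sub>R norm x \<in> K" using False that S by (simp add: K_def subspace_scale)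
    then have "q (x /\<^sub>R norm x) \<le> \<mu>" using v_max \<mu>_def by blast
    moreover have "q x = (x \<bullet> x) * q (x /\<^sub>R norm x)"
      using False by (simp add: q_def matrix_vector_mult_scaleR power2_norm_eq_inner[symmetric]
          power2_eq_square field_simps)
    ultimately show ?thesis by (metis inner_ge_zero mult.commute mult_left_mono)
  qed (simp add: q_def)
  \<comment> \<open>v maximises q on the unit sphere of S; the first-order condition in the direction w
    forces w = 0.\<close>
  define w where "w = \<mu> *\<^sub>R v - M *v v"
  have "w \<in> S" unfolding w_def using S \<open>v \<in> S\<close> inv by (simp add: subspace_diff subspace_scale)
  have "t * (2 * (w \<bullet> w)) \<le> t\<^sup>2 * (\<mu> * (w \<bullet> w) - q w)" for t
  proof -
    have "v - t *\<^sub>R w \<in> S" using S \<open>v \<in> S\<close> \<open>w \<in> S\<close> by (simp add: subspace_diff subspace_scale)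
    then have "q (v - t *\<^sub>R w) \<le> \<mu> * ((v - t *\<^sub>R w) \<bullet> (v - t *\<^sub>R w))" by (rule rayleigh_bound)
    moreover have "q (v - t *\<^sub>R w) = \<mu> - 2 * t * (w \<bullet> (M *v v)) + t\<^sup>2 * q w"
      unfolding q_def \<mu>_def
      by (simp add: algebra_simps matrix_vector_mult_scaleR inner_diff_left inner_diff_right
          symmetric_mat_inner[OF M, of w v] power2_eq_square inner_commute[of v "M *v w"])
    moreover have "v \<bullet> v = 1" using \<open>norm v = 1\<close> by (simp add: norm_eq_1)
    moreover have "w \<bullet> (M *v v) = \<mu> * (v \<bullet> w) - w \<bullet> w"
      unfolding w_def by (simp add: inner_diff_left inner_diff_right algebra_simps inner_commute)
    ultimately show ?thesis
      by (simp add: algebra_simps inner_diff_left inner_diff_right inner_commute[of w v]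
          power2_eq_square)
  qed
  then have "2 * (w \<bullet> w) = 0" by (rule eq_0_if_le_quadratic)
  then have "M *v v = \<mu> *\<^sub>R v" unfolding w_def by simp
  then show ?thesis using that \<open>v \<in> S\<close> \<open>norm v = 1\<close> by (simp add: \<mu>_def q_def)
qed

lemma symmetric_mat_invariant_orthogonal_complement:
  fixes M :: "real^'n^'n"
  assumes M: "symmetric_mat M" and v: "M *v v = c *\<^sub>R v"
    and inv: "\<And>x. x \<in> S \<Longrightarrow> M *v x \<in> S" and x: "x \<in> S \<inter> {x. v \<bullet> x = 0}"
  shows "M *v x \<in> S \<inter> {x. v \<bullet> x = 0}"
proof -
  have "v \<bullet> (M *v x) = c * (v \<bullet> x)"
    using symmetric_mat_inner[OF M, of v x] by (simp add: v)
  then show ?thesis using x inv by simp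
qed

lemma symmetric_mat_orthonormal_eigenbasis_subspace:
  fixes M :: "real^'n^'n"
  assumes M: "symmetric_mat M"
  shows "subspace S \<Longrightarrow> (\<And>x. x \<in> S \<Longrightarrow> M *v x \<in> S) \<Longrightarrow>
    \<exists>B. B \<subseteq> S \<and> finite B \<and> pairwise orthogonal B \<and>
        (\<forall>v\<in>B. norm v = 1 \<and> M *v v = (v \<bullet> (M *v v)) *\<^sub>R v) \<and> span B = S"
proof (induction "dim S" arbitrary: S rule: less_induct)
  case less
  show ?case
  proof (cases "S = {0}")
    case True
    then show ?thesis by (intro exI[of _ "{}"]) auto
  next
    case False
    obtain v where v: "v \<in> S" "norm v = 1" "M *v v = (v \<bullet> (M *v v)) *\<^sub>R v"
      using symmetric_mat_eigenvector_in_invariant_subspace[OF M less.prems False] by blast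
    define S' where "S' = S \<inter> {x. v \<bullet> x = 0}"
    have "subspace S'"
      unfolding S'_def using less.prems(1) by (simp add: subspace_inter subspace_hyperplane)
    moreover have "\<And>x. x \<in> S' \<Longrightarrow> M *v x \<in> S'"
      unfolding S'_def using symmetric_mat_invariant_orthogonal_complement[OF M v(3) less.prems(2)] .
    moreover have "dim S' < dim S"
    proof (rule dim_psubset)
      have "v \<notin> S'" using v(2) by (auto simp: S'_def)
      then have "S' \<subset> S" using v(1) unfolding S'_def by blast
      moreover have "span S' = S'" "span S = S"
        using \<open>subspace S'\<close> less.prems(1) by (simp_all add: span_eq_iff)
      ultimately show "span S' \<subset> span S" by metis
    qed
    ultimately obtain B where B: "B \<subseteq> S'" "finite B" "pairwise orthogonal B"
        "\<forall>v\<in>B. norm v = 1 \<and> M *v v = (v \<bullet> (M *v v)) *\<^sub>R v" "span B = S'"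
      using less.hyps by blast
    have "insert v B \<subseteq> S" using B(1) v(1) by (auto simp: S'_def)
    then have "span (insert v B) \<subseteq> S" using less.prems(1) by (simp add: span_minimal)
    moreover have "S \<subseteq> span (insert v B)"
    proof
      fix x assume "x \<in> S"
      then have "x - (v \<bullet> x) *\<^sub>R v \<in> S'"
        using v less.prems(1)
        by (simp add: S'_def subspace_diff subspace_scale inner_diff_right norm_eq_1)
      then show "x \<in> span (insert v B)" using B(5) by (auto simp: span_insert)
    qed
    moreover have "pairwise orthogonal (insert v B)"
      using B(1,3) by (auto simp: pairwise_insert S'_def orthogonal_def inner_commute)
    ultimately show ?thesis using B v \<open>insert v B \<subseteq> S\<close>
      by (intro exI[of _ "insert v B"]) auto
  qed
qed

definition outer_sum :: "(real^'n \<Rightarrow> real) \<Rightarrow> (real^'n) set \<Rightarrow> real^'n^'n" where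
  "outer_sum c B = (\<chi> i j. \<Sum>v\<in>B. c v * v$i * v$j)"

lemma outer_sum_mult_vec: "outer_sum c B *v x = (\<Sum>v\<in>B. (c v * (v \<bullet> x)) *\<^sub>R v)"
  by (simp add: vec_eq_iff outer_sum_def matrix_vector_mult_def inner_vec_def sum_component
      sum_distrib_left sum_distrib_right sum.swap[of _ B] algebra_simps)

lemma symmetric_mat_outer_sum: "symmetric_mat (outer_sum c B)"
  by (simp add: symmetric_mat_def transpose_def outer_sum_def vec_eq_iff algebra_simps)

lemma psd_mat_outer_sum:
  assumes "\<And>v. v \<in> B \<Longrightarrow> 0 \<le> c v"
  shows "psd_mat (outer_sum c B)"
proof -
  have "x \<bullet> (outer_sum c B *v x) = (\<Sum>v\<in>B. c v * (v \<bullet> x)\<^sup>2)" for x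
    by (simp add: outer_sum_mult_vec inner_sum_right inner_commute power2_eq_square mult.assoc)
  then show ?thesis
    using assms by (simp add: psd_mat_def symmetric_mat_outer_sum sum_nonneg)
qed

locale orthonormal_basis =
  fixes B :: "(real^'n) set"
  assumes finite_basis: "finite B" and pairwise_orthogonal_basis: "pairwise orthogonal B"
    and norm_basis: "\<And>v. v \<in> B \<Longrightarrow> norm v = 1" and span_basis: "span B = UNIV"
begin

lemma inner_basis: "v \<in> B \<Longrightarrow> w \<in> B \<Longrightarrow> v \<bullet> w = (if v = w then 1 else 0)"
  using pairwise_orthogonal_basis norm_basis
  by (force simp: norm_eq_1 orthogonal_def pairwise_def)

lemma mat_eq_by_basis:
  fixes A C :: "real^'n^'n"
  assumes "\<And>w x. w \<in> B \<Longrightarrow> w \<bullet> (A *v x) = w \<bullet> (C *v x)"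
  shows "A = C"
  unfolding matrix_eq
  by (intro allI vector_eq_dot_span[of _ B]) (simp_all add: span_basis assms)

lemma inner_outer_sum: "w \<in> B \<Longrightarrow> w \<bullet> (outer_sum c B *v x) = c w * (w \<bullet> x)"
proof -
  assume w: "w \<in> B"
  have "w \<bullet> (outer_sum c B *v x) = (\<Sum>v\<in>B. if v = w then c w * (w \<bullet> x) else 0)"
    unfolding outer_sum_mult_vec inner_sum_right by (rule sum.cong) (auto simp: inner_basis w)
  then show ?thesis using finite_basis w by simp
qed

lemma trace_eq_sum_basis: "trace A = (\<Sum>w\<in>B. w \<bullet> (A *v w))"
proof -
  have basis_products: "(\<Sum>w\<in>B. w$i * w$j) = (if i = j then 1 else 0)" for i j
  proof -
    have "axis j 1 = (\<Sum>w\<in>B. (axis j 1 \<bullet> w) *\<^sub>R w)"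
      by (rule orthonormal_basis_expand[symmetric])
        (auto simp: pairwise_orthogonal_basis norm_basis finite_basis span_basis)
    then have "axis j 1 $ i = (\<Sum>w\<in>B. w$i * w$j)"
      by (simp add: sum_component inner_axis' mult.commute)
    then show ?thesis by (simp add: axis_def)
  qed
  have "(\<Sum>w\<in>B. w \<bullet> (A *v w)) = (\<Sum>i\<in>UNIV. \<Sum>j\<in>UNIV. A$i$j * (\<Sum>w\<in>B. w$i * w$j))"
    by (simp add: inner_vec_def matrix_vector_mult_def sum_distrib_left sum.swap[of _ B]
        algebra_simps)
  also have "\<dots> = trace A"
    by (simp add: basis_products if_distrib trace_def cong: if_cong)
  finally show ?thesis ..
qed

end

section \<open>Positive and negative parts\<close>

locale orthonormal_eigenbasis = orthonormal_basis B for B :: "(real^'n) set" +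
  fixes M :: "real^'n^'n"
  assumes symmetric: "symmetric_mat M"
    and eigenvector: "\<And>v. v \<in> B \<Longrightarrow> M *v v = (v \<bullet> (M *v v)) *\<^sub>R v"
begin

definition eigval :: "real^'n \<Rightarrow> real" where
  "eigval v = v \<bullet> (M *v v)"

definition pos_spectral :: "real^'n^'n" where
  "pos_spectral = outer_sum (\<lambda>v. max (eigval v) 0) B"

definition neg_spectral :: "real^'n^'n" where
  "neg_spectral = outer_sum (\<lambda>v. max (- eigval v) 0) B"

lemma mult_basis: "w \<in> B \<Longrightarrow> M *v w = eigval w *\<^sub>R w"
  using eigenvector by (simp add: eigval_def)

lemma inner_mult_basis:
  assumes "w \<in> B"
  shows "w \<bullet> (M *v x) = eigval w * (w \<bullet> x)"
proof -
  have "w \<bullet> (M *v x) = (M *v w) \<bullet> x" by (simp add: symmetric_mat_inner[OF symmetric])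
  also have "\<dots> = eigval w * (w \<bullet> x)" by (simp add: mult_basis assms)
  finally show ?thesis .
qed

lemma spectral_decomposition: "M = pos_spectral - neg_spectral"
  by (rule mat_eq_by_basis)
    (simp add: inner_mult_basis matrix_vector_mult_diff_rdistrib inner_diff_right pos_spectral_def
      neg_spectral_def inner_outer_sum max_def algebra_simps)

lemma psd_pos_spectral: "psd_mat pos_spectral"
  unfolding pos_spectral_def by (rule psd_mat_outer_sum) simp

lemma psd_neg_spectral: "psd_mat neg_spectral"
  unfolding neg_spectral_def by (rule psd_mat_outer_sum) simp

lemma pos_neg_spectral_orthogonal: "(pos_spectral *v x) \<bullet> (neg_spectral *v y) = 0"
proof -
  have "(pos_spectral *v x) \<bullet> (neg_spectral *v y) =
      (\<Sum>w\<in>B. max (- eigval w) 0 * (w \<bullet> y) * (w \<bullet> (pos_spectral *v x)))"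
    by (simp add: neg_spectral_def outer_sum_mult_vec inner_sum_right inner_commute)
  also have "\<dots> = 0"
    by (rule sum.neutral) (auto simp: pos_spectral_def inner_outer_sum max_def)
  finally show ?thesis .
qed

lemma psd_decomposition_on_basis:
  assumes P: "psd_mat P" and N: "psd_mat N" and PN: "\<forall>x y. (P *v x) \<bullet> (N *v y) = 0"
    and M: "M = P - N" and w: "w \<in> B"
  shows "P *v w = max (eigval w) 0 *\<^sub>R w"
proof -
  have "P *v w - N *v w = M *v w" by (simp add: M matrix_vector_mult_diff_rdistrib)
  also have "\<dots> = eigval w *\<^sub>R w" by (rule mult_basis[OF w])
  finally have diff: "P *v w - N *v w = eigval w *\<^sub>R w" .
  have orth: "(P *v w) \<bullet> (N *v w) = 0" using PN by blast
  show ?thesis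
  proof (cases "eigval w > 0")
    case True
    have "(N *v w) \<bullet> (N *v w) = - eigval w * (w \<bullet> (N *v w))"
      using arg_cong[OF diff, of "\<lambda>z. z \<bullet> (N *v w)"] orth by (simp add: inner_diff_left)
    moreover have "0 \<le> w \<bullet> (N *v w)" using N by (simp add: psd_mat_def)
    ultimately have "(N *v w) \<bullet> (N *v w) \<le> 0" using True by (simp add: mult_nonneg_nonneg)
    then have "N *v w = 0" by (metis antisym inner_ge_zero inner_eq_zero_iff)
    then show ?thesis using diff True by simp
  next
    case False
    have "(P *v w) \<bullet> (P *v w) = eigval w * (w \<bullet> (P *v w))"
      using arg_cong[OF diff, of "\<lambda>z. (P *v w) \<bullet> z"] orth
      by (simp add: inner_diff_right inner_commute)
    moreover have "0 \<le> w \<bullet> (P *v w)" using P by (simp add: psd_mat_def)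
    ultimately have "(P *v w) \<bullet> (P *v w) \<le> 0" using False by (simp add: mult_nonpos_nonneg)
    then have "P *v w = 0" by (metis antisym inner_ge_zero inner_eq_zero_iff)
    then show ?thesis using False by simp
  qed
qed

lemma pos_part_mat_eq: "pos_part_mat M = pos_spectral"
  unfolding pos_part_mat_def
proof (rule the_equality)
  show "\<exists>N. psd_mat pos_spectral \<and> psd_mat N \<and>
      (\<forall>x y. (pos_spectral *v x) \<bullet> (N *v y) = 0) \<and> M = pos_spectral - N"
    using psd_pos_spectral psd_neg_spectral pos_neg_spectral_orthogonal spectral_decomposition
    by blast
next
  fix P assume "\<exists>N. psd_mat P \<and> psd_mat N \<and> (\<forall>x y. (P *v x) \<bullet> (N *v y) = 0) \<and> M = P - N"
  then obtain N where decomp: "psd_mat P" "psd_mat N" "\<forall>x y. (P *v x) \<bullet> (N *v y) = 0" "M = P - N"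
    by blast
  show "P = pos_spectral"
  proof (rule mat_eq_by_basis)
    fix w x assume w: "w \<in> B"
    have "w \<bullet> (P *v x) = (P *v w) \<bullet> x"
      using symmetric_mat_inner[of P w x] decomp(1) by (simp add: psd_mat_def)
    also have "\<dots> = w \<bullet> (pos_spectral *v x)"
      by (simp add: psd_decomposition_on_basis[OF decomp w] pos_spectral_def inner_outer_sum w)
    finally show "w \<bullet> (P *v x) = w \<bullet> (pos_spectral *v x)" .
  qed
qed

lemma neg_part_mat_eq: "neg_part_mat M = neg_spectral"
  unfolding neg_part_mat_def pos_part_mat_eq by (subst (2) spectral_decomposition) simp

lemma trace_pos_spectral_le:
  assumes P: "psd_mat P" and N: "psd_mat N" and M: "M = P - N"
  shows "trace pos_spectral \<le> trace P"
proof -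
  have "0 \<le> w \<bullet> ((P - pos_spectral) *v w)" if w: "w \<in> B" for w
  proof (cases "eigval w > 0")
    case True
    have "P - pos_spectral = N - neg_spectral"
      using M spectral_decomposition by (metis add_diff_cancel_left diff_add_cancel)
    moreover have "w \<bullet> (neg_spectral *v w) = 0" using True w by (simp add: neg_spectral_def inner_outer_sum)
    ultimately show ?thesis using N
      by (simp add: psd_mat_def matrix_vector_mult_diff_rdistrib inner_diff_right)
  next
    case False
    then have "w \<bullet> (pos_spectral *v w) = 0" using w by (simp add: pos_spectral_def inner_outer_sum)
    then show ?thesis using P
      by (simp add: psd_mat_def matrix_vector_mult_diff_rdistrib inner_diff_right)
  qed
  then have "0 \<le> trace (P - pos_spectral)" by (simp add: trace_eq_sum_basis sum_nonneg)
  then show ?thesis by (simp add: trace_sub)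
qed

end

lemma symmetric_mat_orthonormal_eigenbasis:
  "symmetric_mat M \<Longrightarrow> \<exists>B. orthonormal_eigenbasis B M"
  using symmetric_mat_orthonormal_eigenbasis_subspace[of M UNIV]
  by (auto simp: orthonormal_eigenbasis_def orthonormal_eigenbasis_axioms_def orthonormal_basis_def)

lemma psd_pos_part_mat: "symmetric_mat M \<Longrightarrow> psd_mat (pos_part_mat M)"
  using symmetric_mat_orthonormal_eigenbasis orthonormal_eigenbasis.psd_pos_spectral
    orthonormal_eigenbasis.pos_part_mat_eq by metis

lemma psd_neg_part_mat: "symmetric_mat M \<Longrightarrow> psd_mat (neg_part_mat M)"
  using symmetric_mat_orthonormal_eigenbasis orthonormal_eigenbasis.psd_neg_spectral
    orthonormal_eigenbasis.neg_part_mat_eq by metis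

lemma trace_pos_part_mat_le:
  assumes "symmetric_mat M" "psd_mat P" "psd_mat N" "M = P - N"
  shows "trace (pos_part_mat M) \<le> trace P"
  using symmetric_mat_orthonormal_eigenbasis[OF assms(1)] assms(2-4)
    orthonormal_eigenbasis.trace_pos_spectral_le orthonormal_eigenbasis.pos_part_mat_eq by metis

section \<open>Pucci operators and uniform ellipticity\<close>

lemma pucci_plus_le_decomposition:
  fixes X :: "real^'n^'n"
  assumes "lam \<le> Lam" "symmetric_mat X" "psd_mat P" "psd_mat N" "X = P - N"
  shows "pucci_plus lam Lam X \<le> Lam * trace P - lam * trace N"
proof -
  have "trace (pos_part_mat X) \<le> trace P" using trace_pos_part_mat_le assms(2-5) .
  then have "(Lam - lam) * trace (pos_part_mat X) \<le> (Lam - lam) * trace P"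
    using assms(1) by (simp add: mult_left_mono)
  moreover have tneg: "trace (neg_part_mat X) = trace (pos_part_mat X) - trace X"
    and tN: "trace N = trace P - trace X"
    using assms(5) by (simp_all add: neg_part_mat_def trace_sub)
  ultimately show ?thesis unfolding pucci_plus_def tneg tN by (simp add: algebra_simps)
qed

lemma pucci_plus_subadditive:
  fixes X Y :: "real^'n^'n"
  assumes "lam \<le> Lam" "symmetric_mat X" "symmetric_mat Y"
  shows "pucci_plus lam Lam (X + Y) \<le> pucci_plus lam Lam X + pucci_plus lam Lam Y"
proof -
  have "X + Y = (pos_part_mat X + pos_part_mat Y) - (neg_part_mat X + neg_part_mat Y)"
    by (simp add: neg_part_mat_def)
  then have "pucci_plus lam Lam (X + Y) \<le> Lam * trace (pos_part_mat X + pos_part_mat Y)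
      - lam * trace (neg_part_mat X + neg_part_mat Y)"
    using assms by (intro pucci_plus_le_decomposition psd_mat_add symmetric_mat_add
        psd_pos_part_mat psd_neg_part_mat)
  then show ?thesis by (simp add: pucci_plus_def trace_add algebra_simps)
qed

lemma pucci_plus_zero_le: "lam \<le> Lam \<Longrightarrow> pucci_plus lam Lam (0::real^'n^'n) \<le> 0"
  using pucci_plus_le_decomposition[of lam Lam 0 0 0] symmetric_mat_zero psd_mat_zero
  by (simp add: trace_def)

lemma uniformly_elliptic_pucci_plus:
  assumes "lam \<le> Lam"
  shows "uniformly_elliptic lam Lam (pucci_plus lam Lam :: real^'n^'n \<Rightarrow> real)"
  unfolding uniformly_elliptic_def
proof (intro allI impI conjI)
  fix A B :: "real^'n^'n"
  assume "symmetric_mat A \<and> psd_mat B"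
  then have A: "symmetric_mat A" and B: "psd_mat B" and AB: "symmetric_mat (A + B)"
    by (auto simp: symmetric_mat_add psd_mat_imp_symmetric_mat)
  have "A = pos_part_mat (A + B) - (neg_part_mat (A + B) + B)"
    by (simp add: neg_part_mat_def)
  then have "pucci_plus lam Lam A \<le> Lam * trace (pos_part_mat (A + B))
      - lam * trace (neg_part_mat (A + B) + B)"
    using assms A B AB
    by (intro pucci_plus_le_decomposition psd_mat_add psd_pos_part_mat psd_neg_part_mat)
  then show "lam * trace B \<le> pucci_plus lam Lam (A + B) - pucci_plus lam Lam A"
    by (simp add: pucci_plus_def trace_add algebra_simps)
  have "A + B = (pos_part_mat A + B) - neg_part_mat A"
    by (simp add: neg_part_mat_def)
  then have "pucci_plus lam Lam (A + B) \<le> Lam * trace (pos_part_mat A + B)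
      - lam * trace (neg_part_mat A)"
    using assms A B AB
    by (intro pucci_plus_le_decomposition psd_mat_add psd_pos_part_mat psd_neg_part_mat)
  then show "pucci_plus lam Lam (A + B) - pucci_plus lam Lam A \<le> Lam * trace B"
    by (simp add: pucci_plus_def trace_add algebra_simps)
qed

lemma uniformly_elliptic_translate:
  fixes F :: "real^'n^'n \<Rightarrow> real"
  assumes "uniformly_elliptic lam Lam F" and "symmetric_mat X"
  shows "uniformly_elliptic lam Lam (\<lambda>M. c + F (M - X))"
  unfolding uniformly_elliptic_def
proof (intro allI impI)
  fix A B :: "real^'n^'n"
  assume AB: "symmetric_mat A \<and> psd_mat B"
  then have "symmetric_mat (A - X)" using assms(2) by (simp add: symmetric_mat_diff)
  then have bounds: "lam * trace B \<le> F ((A - X) + B) - F (A - X) \<and>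
      F ((A - X) + B) - F (A - X) \<le> Lam * trace B"
    using assms(1) AB unfolding uniformly_elliptic_def by blast
  have shift: "A + B - X = (A - X) + B" by (simp add: algebra_simps)
  show "lam * trace B \<le> (c + F (A + B - X)) - (c + F (A - X)) \<and>
      (c + F (A + B - X)) - (c + F (A - X)) \<le> Lam * trace B"
    unfolding shift using bounds by simp
qed

lemma uniformly_elliptic_INF:
  fixes f :: "'i \<Rightarrow> real^'n^'n \<Rightarrow> real"
  assumes "I \<noteq> {}" and ell: "\<And>i. i \<in> I \<Longrightarrow> uniformly_elliptic lam Lam (f i)"
    and bdd: "\<And>M. symmetric_mat M \<Longrightarrow> bdd_below ((\<lambda>i. f i M) ` I)"
  shows "uniformly_elliptic lam Lam (\<lambda>M. INF i\<in>I. f i M)"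
  unfolding uniformly_elliptic_def
proof (intro allI impI)
  fix A B :: "real^'n^'n"
  assume AB: "symmetric_mat A \<and> psd_mat B"
  then have "symmetric_mat (A + B)" by (simp add: symmetric_mat_add psd_mat_imp_symmetric_mat)
  have step: "f i A + lam * trace B \<le> f i (A + B)" "f i (A + B) \<le> f i A + Lam * trace B"
    if "i \<in> I" for i
    using ell[OF that] AB unfolding uniformly_elliptic_def by (auto simp: algebra_simps)
  have "(INF i\<in>I. f i A) + lam * trace B \<le> (INF i\<in>I. f i (A + B))"
  proof (rule cINF_greatest[OF \<open>I \<noteq> {}\<close>])
    fix i assume "i \<in> I"
    then have "(INF i\<in>I. f i A) \<le> f i A" using AB by (intro cINF_lower bdd) simp_all
    then show "(INF i\<in>I. f i A) + lam * trace B \<le> f i (A + B)" using step \<open>i \<in> I\<close> by force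
  qed
  moreover have "(INF i\<in>I. f i (A + B)) - Lam * trace B \<le> (INF i\<in>I. f i A)"
  proof (rule cINF_greatest[OF \<open>I \<noteq> {}\<close>])
    fix i assume "i \<in> I"
    then have "(INF i\<in>I. f i (A + B)) \<le> f i (A + B)"
      using \<open>symmetric_mat (A + B)\<close> by (intro cINF_lower bdd)
    then show "(INF i\<in>I. f i (A + B)) - Lam * trace B \<le> f i A" using step \<open>i \<in> I\<close> by force
  qed
  ultimately show "lam * trace B \<le> (INF i\<in>I. f i (A + B)) - (INF i\<in>I. f i A) \<and>
      (INF i\<in>I. f i (A + B)) - (INF i\<in>I. f i A) \<le> Lam * trace B"
    by linarith
qed

lemma uniformly_elliptic_imp_pucci_bounds:
  fixes F :: "real^'n^'n \<Rightarrow> real"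
  assumes F: "uniformly_elliptic lam Lam F" and A: "symmetric_mat A" and B: "symmetric_mat B"
  shows "pucci_minus lam Lam (A - B) \<le> F A - F B \<and> F A - F B \<le> pucci_plus lam Lam (A - B)"
proof -
  define P where "P = pos_part_mat (A - B)"
  define N where "N = neg_part_mat (A - B)"
  have "symmetric_mat (A - B)" using A B by (rule symmetric_mat_diff)
  then have P: "psd_mat P" and N: "psd_mat N"
    unfolding P_def N_def by (simp_all add: psd_pos_part_mat psd_neg_part_mat)
  define C where "C = B - N"
  have "symmetric_mat C"
    unfolding C_def using B N by (simp add: symmetric_mat_diff psd_mat_imp_symmetric_mat)
  moreover have "A = C + P" "B = C + N" by (simp_all add: C_def P_def N_def neg_part_mat_def)
  ultimately have "lam * trace P \<le> F A - F C \<and> F A - F C \<le> Lam * trace P"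
    "lam * trace N \<le> F B - F C \<and> F B - F C \<le> Lam * trace N"
    using F P N unfolding uniformly_elliptic_def by metis+
  then show ?thesis unfolding pucci_plus_def pucci_minus_def P_def[symmetric] N_def[symmetric]
    by linarith
qed

lemma uniformly_elliptic_extension:
  fixes X :: "'a \<Rightarrow> real^'n^'n" and c :: "'a \<Rightarrow> real"
  assumes "lam \<le> Lam" and X: "\<And>p. p \<in> S \<Longrightarrow> symmetric_mat (X p)"
    and pucci: "\<And>p q. p \<in> S \<Longrightarrow> q \<in> S \<Longrightarrow> c p - c q \<le> pucci_plus lam Lam (X p - X q)"
  shows "\<exists>F. uniformly_elliptic lam Lam F \<and> (\<forall>p\<in>S. F (X p) = c p)"
proof (cases "S = {}")
  case True
  then show ?thesis using uniformly_elliptic_pucci_plus[OF assms(1)] by blast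
next
  case False
  define g where "g p M = c p + pucci_plus lam Lam (M - X p)" for p M
  have bdd: "bdd_below ((\<lambda>p. g p M) ` S)" if M: "symmetric_mat M" for M
  proof -
    obtain q where "q \<in> S" using False by blast
    have "c q - pucci_plus lam Lam (X q - M) \<le> g p M" if "p \<in> S" for p
    proof -
      have "c q - c p \<le> pucci_plus lam Lam ((X q - M) + (M - X p))"
        using pucci[OF \<open>q \<in> S\<close> \<open>p \<in> S\<close>] by simp
      also have "\<dots> \<le> pucci_plus lam Lam (X q - M) + pucci_plus lam Lam (M - X p)"
        using assms(1) M X \<open>q \<in> S\<close> \<open>p \<in> S\<close>
        by (intro pucci_plus_subadditive symmetric_mat_diff) auto
      finally show ?thesis by (simp add: g_def)
    qed
    then show ?thesis by (rule bdd_belowI2)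
  qed
  define F where "F M = (INF p\<in>S. g p M)" for M
  have "uniformly_elliptic lam Lam F"
    unfolding F_def g_def using False bdd
    by (intro uniformly_elliptic_INF uniformly_elliptic_translate uniformly_elliptic_pucci_plus
        assms(1) X) (auto simp: g_def)
  moreover have "F (X q) = c q" if "q \<in> S" for q
  proof (rule antisym)
    have "F (X q) \<le> g q (X q)" unfolding F_def using that by (intro cINF_lower bdd X)
    moreover have "pucci_plus lam Lam (X q - X q) \<le> 0" using pucci_plus_zero_le[OF assms(1)] by simp
    ultimately show "F (X q) \<le> c q" by (simp add: g_def)
    show "c q \<le> F (X q)"
      unfolding F_def g_def using False pucci that by (intro cINF_greatest) (auto simp: algebra_simps)
  qed
  ultimately show ?thesis by blast
qed

theorem lemma5p1:
  fixes lam Lam :: real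
    and \<Omega> :: "(real \<times> (real^'n)) set"
    and u :: "real \<times> (real^'n) \<Rightarrow> real"
    and ut :: "real \<times> (real^'n) \<Rightarrow> real"
    and D2u :: "real \<times> (real^'n) \<Rightarrow> real^'n^'n"
  assumes "0 < lam" and "lam \<le> Lam"
    and ut: "\<And>t x. (t, x) \<in> \<Omega> \<Longrightarrow> ((\<lambda>s. u (s, x)) has_real_derivative ut (t, x)) (at t)"
    and D2u: "\<And>t x. (t, x) \<in> \<Omega> \<Longrightarrow> twice_diff_at (\<lambda>y. u (t, y)) x (D2u (t, x))"
    and D2u_sym: "\<And>p. p \<in> \<Omega> \<Longrightarrow> symmetric_mat (D2u p)"
  shows "(\<exists>F. uniformly_elliptic lam Lam F \<and> (\<forall>p\<in>\<Omega>. ut p = F (D2u p)))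
     \<longleftrightarrow> (\<forall>p\<in>\<Omega>. \<forall>q\<in>\<Omega>.
            pucci_minus lam Lam (D2u p - D2u q) \<le> ut p - ut q \<and>
            ut p - ut q \<le> pucci_plus lam Lam (D2u p - D2u q))"
proof
  \<comment> \<open>The differentiability hypotheses only give ut and D2u their meaning.\<close>
  assume "\<exists>F. uniformly_elliptic lam Lam F \<and> (\<forall>p\<in>\<Omega>. ut p = F (D2u p))"
  then obtain F where F: "uniformly_elliptic lam Lam F" and ut_F: "\<forall>p\<in>\<Omega>. ut p = F (D2u p)"
    by blast
  show "\<forall>p\<in>\<Omega>. \<forall>q\<in>\<Omega>. pucci_minus lam Lam (D2u p - D2u q) \<le> ut p - ut q \<and>
      ut p - ut q \<le> pucci_plus lam Lam (D2u p - D2u q)"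
    using uniformly_elliptic_imp_pucci_bounds[OF F D2u_sym D2u_sym] ut_F by simp
next
  assume "\<forall>p\<in>\<Omega>. \<forall>q\<in>\<Omega>. pucci_minus lam Lam (D2u p - D2u q) \<le> ut p - ut q \<and>
      ut p - ut q \<le> pucci_plus lam Lam (D2u p - D2u q)"
  then have "\<exists>F. uniformly_elliptic lam Lam F \<and> (\<forall>p\<in>\<Omega>. F (D2u p) = ut p)"
    using \<open>lam \<le> Lam\<close> D2u_sym by (intro uniformly_elliptic_extension) auto
  then show "\<exists>F. uniformly_elliptic lam Lam F \<and> (\<forall>p\<in>\<Omega>. ut p = F (D2u p))"
    by metis
qed

end
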